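(* For every relation $\mathcal{R}$ on distributions, $Cv(b(\mathcal{R})) \subseteq b(Cv(\mathcal{R}))$, i.e. $Cv$ is $b$-compatible.
   Context: $Cv(\mathcal{R})$ is the convex hull of a relation $\mathcal{R}$ on distributions: the set of pairs $(\sum_{i\in I} p_i\cdot\Delta_i, \sum_{i\in I} p_i\cdot\Theta_i)$ with $\Delta_i \mathcal{R} \Theta_i$ for all $i$ and $\sum_i p_i = 1$. $b$ is the monotone function on relations whose greatest fixed point is constrained saturated bisimilarity: $(\Delta,\Theta) \in b(\mathcal{R})$ iff $\Delta$ and $\Theta$ satisfy the same barbs ($\downarrow_c^p$: total probability $p$ of configurations ready to output on free channel $c$; $\downarrow_\bot^p$: probability $p$ of deadlock $\bot$), and for every context $O[\cdot]$, whenever $O[\Delta] \rightsquigarrow_\pi \Delta'$ there is $\Theta'$ with $O[\Theta] \rightsquigarrow_\pi \Theta'$ and $\Delta'\mathcal{R}\Theta'$, and symmetrically. Here distributions are over lqCCS extended configurations $\langle\!\langle \rho, P, R \rangle\!\rangle$ (density operator, process, observer) and $\bot$; contexts $O[\cdot] = [\cdot] \parallel R'$ add an observer $R'$; $\rightsquigarrow_\pi$ is the enhanced semantics with index $\pi = \diamond$ (process moves) or $\pi \in \{\ell,r\}^*$ (observer component moves), lifted to distributions by linearity, and it is left-decomposable: if $\sum_i p_i\cdot\Delta_i \rightsquigarrow_\pi \Delta'$ then $\Delta' = \sum_i p_i\cdot\Delta_i'$ with $\Delta_i \rightsquigarrow_\pi \Delta_i'$. *)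

theory Defs
  imports "HOL-Probability.Probability_Mass_Function"
begin

(* Extended configurations <<rho, P, R>> (density operator, process, observer);
   the deadlock configuration bot is represented by None. *)
type_synonym ('rho,'p,'r) conf = "'rho \<times> 'p \<times> 'r"
type_synonym ('rho,'p,'r) dist = "('rho,'p,'r) conf option pmf"
type_synonym ('rho,'p,'r) drel = "(('rho,'p,'r) dist \<times> ('rho,'p,'r) dist) set"

(* indices of the enhanced semantics: diamond (process moves) or a path in {l,r}^* *)
datatype dir = DirL | DirR
datatype idx = Diamond | ObsPath "dir list"

(* Convex hull of a relation on distributions: pairs (sum_i p_i Delta_i, sum_i p_i Theta_i),
   finite index set, weights given by a finitely supported pmf P on indices. *)
definition Cv :: "('a pmf \<times> 'a pmf) set \<Rightarrow> ('a pmf \<times> 'a pmf) set" where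
  "Cv R = {(bind_pmf P D, bind_pmf P T) | P D T.
             finite (set_pmf (P :: nat pmf)) \<and> (\<forall>i\<in>set_pmf P. (D i, T i) \<in> R)}"

definition barb_ch :: "('ch \<Rightarrow> ('rho,'p,'r) conf \<Rightarrow> bool) \<Rightarrow> ('rho,'p,'r) dist \<Rightarrow> 'ch \<Rightarrow> real \<Rightarrow> bool" where
  "barb_ch ready \<Delta> c p \<longleftrightarrow> measure_pmf.prob \<Delta> {Some s | s. ready c s} = p"

definition barb_bot :: "('rho,'p,'r) dist \<Rightarrow> real \<Rightarrow> bool" where
  "barb_bot \<Delta> p \<longleftrightarrow> pmf \<Delta> None = p"

definition same_barbs :: "('ch \<Rightarrow> ('rho,'p,'r) conf \<Rightarrow> bool) \<Rightarrow> ('rho,'p,'r) dist \<Rightarrow> ('rho,'p,'r) dist \<Rightarrow> bool" where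
  "same_barbs ready \<Delta> \<Theta> \<longleftrightarrow>
     (\<forall>c p. barb_ch ready \<Delta> c p \<longleftrightarrow> barb_ch ready \<Theta> c p) \<and>
     (\<forall>p. barb_bot \<Delta> p \<longleftrightarrow> barb_bot \<Theta> p)"

(* context O[.] = [.] || R' : adds observer R' in parallel, lifted to distributions *)
definition plug :: "('r \<Rightarrow> 'r \<Rightarrow> 'r) \<Rightarrow> 'r \<Rightarrow> ('rho,'p,'r) dist \<Rightarrow> ('rho,'p,'r) dist" where
  "plug par R' \<Delta> = map_pmf (map_option (\<lambda>(\<rho>, P, R). (\<rho>, P, par R R'))) \<Delta>"

(* the monotone function b whose greatest fixed point is constrained saturated bisimilarity;
   step pi Delta Delta' is the enhanced semantics Delta ~>_pi Delta' on distributions *)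
definition b :: "('ch \<Rightarrow> ('rho,'p,'r) conf \<Rightarrow> bool) \<Rightarrow> ('r \<Rightarrow> 'r \<Rightarrow> 'r)
                 \<Rightarrow> (idx \<Rightarrow> ('rho,'p,'r) dist \<Rightarrow> ('rho,'p,'r) dist \<Rightarrow> bool)
                 \<Rightarrow> ('rho,'p,'r) drel \<Rightarrow> ('rho,'p,'r) drel" where
  "b ready par step R = {(\<Delta>, \<Theta>).
     same_barbs ready \<Delta> \<Theta> \<and>
     (\<forall>R' \<pi> \<Delta>'. step \<pi> (plug par R' \<Delta>) \<Delta>' \<longrightarrow>
         (\<exists>\<Theta>'. step \<pi> (plug par R' \<Theta>) \<Theta>' \<and> (\<Delta>', \<Theta>') \<in> R)) \<and>
     (\<forall>R' \<pi> \<Theta>'. step \<pi> (plug par R' \<Theta>) \<Theta>' \<longrightarrow>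
         (\<exists>\<Delta>'. step \<pi> (plug par R' \<Delta>) \<Delta>' \<and> (\<Delta>', \<Theta>') \<in> R))}"

definition step_linear :: "('i \<Rightarrow> 'a pmf \<Rightarrow> 'a pmf \<Rightarrow> bool) \<Rightarrow> bool" where
  "step_linear step \<longleftrightarrow> (\<forall>\<pi> (P :: nat pmf) D D'. finite (set_pmf P) \<and>
      (\<forall>i\<in>set_pmf P. step \<pi> (D i) (D' i)) \<longrightarrow> step \<pi> (bind_pmf P D) (bind_pmf P D'))"

definition left_decomposable :: "('i \<Rightarrow> 'a pmf \<Rightarrow> 'a pmf \<Rightarrow> bool) \<Rightarrow> bool" where
  "left_decomposable step \<longleftrightarrow> (\<forall>\<pi> (P :: nat pmf) D \<Delta>'. finite (set_pmf P) \<and>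
      step \<pi> (bind_pmf P D) \<Delta>' \<longrightarrow>
      (\<exists>D'. \<Delta>' = bind_pmf P D' \<and> (\<forall>i\<in>set_pmf P. step \<pi> (D i) (D' i))))"

end

theory Submission
  imports Defs
begin

(* Barbs are probabilities of events, which are linear in the distribution; transitions
   of a convex combination decompose into transitions of its components (left
   decomposability), each of which can be matched using b(R), and the matching
   transitions recombine by linearity into a pair of Cv(R). *)

lemma prob_bind_pmf_cong:
  assumes "\<And>i. i \<in> set_pmf P \<Longrightarrow> measure_pmf.prob (D i) A = measure_pmf.prob (T i) A"
  shows "measure_pmf.prob (bind_pmf P D) A = measure_pmf.prob (bind_pmf P T) A"
proof -
  have "emeasure (bind_pmf P D) A = emeasure (bind_pmf P T) A"
    unfolding emeasure_bind_pmf
    using assms by (intro nn_integral_cong_AE)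
      (auto simp: AE_measure_pmf_iff measure_pmf.emeasure_eq_measure)
  then show ?thesis
    by (simp add: measure_pmf.emeasure_eq_measure)
qed

lemma same_barbs_bind_pmf:
  assumes "\<And>i. i \<in> set_pmf P \<Longrightarrow> same_barbs ready (D i) (T i)"
  shows "same_barbs ready (bind_pmf P D) (bind_pmf P T)"
proof -
  have "measure_pmf.prob (bind_pmf P D) {Some s | s. ready c s} =
        measure_pmf.prob (bind_pmf P T) {Some s | s. ready c s}" for c
    using assms by (intro prob_bind_pmf_cong) (simp add: same_barbs_def barb_ch_def)
  moreover have "pmf (bind_pmf P D) None = pmf (bind_pmf P T) None"
    using assms unfolding measure_pmf_single[symmetric]
    by (intro prob_bind_pmf_cong) (simp add: same_barbs_def barb_bot_def measure_pmf_single)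
  ultimately show ?thesis
    unfolding same_barbs_def barb_ch_def barb_bot_def by simp
qed

lemma plug_bind_pmf: "plug par R' (bind_pmf P D) = bind_pmf P (\<lambda>i. plug par R' (D i))"
  unfolding plug_def by (rule map_bind_pmf)

lemma Cv_converse: "Cv (R\<inverse>) = (Cv R)\<inverse>"
  unfolding Cv_def by blast

lemma bind_pmf_step_matched_in_Cv:
  assumes lin: "step_linear step" and ld: "left_decomposable step"
    and fin: "finite (set_pmf (P :: nat pmf))"
    and match: "\<And>i \<Delta>'. i \<in> set_pmf P \<Longrightarrow> step \<pi> (D i) \<Delta>' \<Longrightarrow>
                  \<exists>\<Theta>'. step \<pi> (T i) \<Theta>' \<and> (\<Delta>', \<Theta>') \<in> Q"
    and "step \<pi> (bind_pmf P D) \<Delta>'"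
  shows "\<exists>\<Theta>'. step \<pi> (bind_pmf P T) \<Theta>' \<and> (\<Delta>', \<Theta>') \<in> Cv Q"
proof -
  obtain D' where \<Delta>': "\<Delta>' = bind_pmf P D'"
    and steps_D: "\<forall>i\<in>set_pmf P. step \<pi> (D i) (D' i)"
    using ld fin \<open>step \<pi> (bind_pmf P D) \<Delta>'\<close> unfolding left_decomposable_def by blast
  have "\<forall>i\<in>set_pmf P. \<exists>\<Theta>'. step \<pi> (T i) \<Theta>' \<and> (D' i, \<Theta>') \<in> Q"
    using match steps_D by blast
  then obtain T' where steps_T: "\<forall>i\<in>set_pmf P. step \<pi> (T i) (T' i) \<and> (D' i, T' i) \<in> Q"
    by metis
  have "step \<pi> (bind_pmf P T) (bind_pmf P T')"
    using lin fin steps_T unfolding step_linear_def by blast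
  moreover have "(\<Delta>', bind_pmf P T') \<in> Cv Q"
    unfolding Cv_def \<Delta>' using fin steps_T by blast
  ultimately show ?thesis
    by blast
qed

theorem lemmaC7:
  fixes ready :: "'ch \<Rightarrow> ('rho,'p,'r) conf \<Rightarrow> bool"
    and par :: "'r \<Rightarrow> 'r \<Rightarrow> 'r"
    and step :: "idx \<Rightarrow> ('rho,'p,'r) dist \<Rightarrow> ('rho,'p,'r) dist \<Rightarrow> bool"
    and R :: "('rho,'p,'r) drel"
  assumes "step_linear step"
    and "left_decomposable step"
  shows "Cv (b ready par step R) \<subseteq> b ready par step (Cv R)"
proof clarify
  fix \<Delta> \<Theta> assume "(\<Delta>, \<Theta>) \<in> Cv (b ready par step R)"
  then obtain P D T where \<Delta>: "\<Delta> = bind_pmf P D" and \<Theta>: "\<Theta> = bind_pmf P T"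
    and fin: "finite (set_pmf (P :: nat pmf))"
    and in_b: "\<forall>i\<in>set_pmf P. (D i, T i) \<in> b ready par step R"
    unfolding Cv_def by blast
  have barbs: "\<And>i. i \<in> set_pmf P \<Longrightarrow> same_barbs ready (D i) (T i)"
    and D_moves_matched: "\<And>i R' \<pi> \<Delta>'. i \<in> set_pmf P \<Longrightarrow> step \<pi> (plug par R' (D i)) \<Delta>' \<Longrightarrow>
                  \<exists>\<Theta>'. step \<pi> (plug par R' (T i)) \<Theta>' \<and> (\<Delta>', \<Theta>') \<in> R"
    and T_moves_matched: "\<And>i R' \<pi> \<Theta>'. i \<in> set_pmf P \<Longrightarrow> step \<pi> (plug par R' (T i)) \<Theta>' \<Longrightarrow>
                  \<exists>\<Delta>'. step \<pi> (plug par R' (D i)) \<Delta>' \<and> (\<Theta>', \<Delta>') \<in> R\<inverse>"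
    using in_b unfolding b_def by auto
  have "same_barbs ready \<Delta> \<Theta>"
    unfolding \<Delta> \<Theta> using barbs by (rule same_barbs_bind_pmf)
  moreover have "\<exists>\<Theta>'. step \<pi> (plug par R' \<Theta>) \<Theta>' \<and> (\<Delta>', \<Theta>') \<in> Cv R"
    if "step \<pi> (plug par R' \<Delta>) \<Delta>'" for R' \<pi> \<Delta>'
    using that D_moves_matched unfolding \<Delta> \<Theta> plug_bind_pmf
    by (intro bind_pmf_step_matched_in_Cv[OF assms fin]) blast+
  moreover have "\<exists>\<Delta>'. step \<pi> (plug par R' \<Delta>) \<Delta>' \<and> (\<Delta>', \<Theta>') \<in> Cv R"
    if "step \<pi> (plug par R' \<Theta>) \<Theta>'" for R' \<pi> \<Theta>'
  proof -
    have "\<exists>\<Delta>'. step \<pi> (plug par R' \<Delta>) \<Delta>' \<and> (\<Theta>', \<Delta>') \<in> Cv (R\<inverse>)"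
      using that T_moves_matched unfolding \<Delta> \<Theta> plug_bind_pmf
      by (intro bind_pmf_step_matched_in_Cv[OF assms fin]) blast+
    then show ?thesis
      unfolding Cv_converse by blast
  qed
  ultimately show "(\<Delta>, \<Theta>) \<in> b ready par step (Cv R)"
    unfolding b_def by blast
qed

end
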